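(* Let $G$ be a finite group, $T$ a $G$-Tambara functor, $I,J$ Tambara ideals of $T$ and $H\le G$. Then, as ideals of the ring $T(G/H)$, $\sqrt{(IJ)(G/H)}=\sqrt{I(G/H)}\cap\sqrt{J(G/H)}$, where $\sqrt{\cdot}$ denotes the ordinary radical of a ring ideal.
   Context: All rings are commutative with unit. A $G$-Tambara functor $T$ consists of commutative rings $T(G/H)$ for subgroups $H\le G$ with restriction ring maps, additive transfer maps, multiplicative norm maps and conjugation isomorphisms satisfying the standard Tambara axioms (Hill–Mazur). A Tambara ideal is a family of ring ideals $I(G/H)\subseteq T(G/H)$ closed under restriction, transfer, norm and conjugation. The product $IJ$ is the Tambara ideal generated by the levelwise products $I(G/H)\cdot J(G/H)$, $H\le G$ (i.e. the smallest Tambara ideal containing them). *)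

theory Defs
  imports "HOL-Algebra.Algebra" "HOL-Library.FuncSet"
begin

definition radical :: "('a, 'b) ring_scheme \<Rightarrow> 'a set \<Rightarrow> 'a set" where
  "radical R I = {x \<in> carrier R. \<exists>n::nat. x [^]\<^bsub>R\<^esub> n \<in> I}"

definition conjg :: "('g, 'm) monoid_scheme \<Rightarrow> 'g \<Rightarrow> 'g set \<Rightarrow> 'g set" where
  "conjg G g K = (\<lambda>k. g \<otimes>\<^bsub>G\<^esub> k \<otimes>\<^bsub>G\<^esub> inv\<^bsub>G\<^esub> g) ` K"

definition lcos :: "('g, 'm) monoid_scheme \<Rightarrow> 'g set \<Rightarrow> 'g set \<Rightarrow> 'g set set" where
  "lcos G H K = {h <#\<^bsub>G\<^esub> K | h. h \<in> H}"

definition orbit_reps :: "('g \<Rightarrow> 'x \<Rightarrow> 'x) \<Rightarrow> 'g set \<Rightarrow> 'x set \<Rightarrow> 'x set \<Rightarrow> bool" where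
  "orbit_reps act Hs Xs R \<longleftrightarrow> R \<subseteq> Xs \<and> (\<forall>x\<in>Xs. \<exists>!r. r \<in> R \<and> (\<exists>h\<in>Hs. act h r = x))"

definition stab :: "('g \<Rightarrow> 'x \<Rightarrow> 'x) \<Rightarrow> 'g set \<Rightarrow> 'x \<Rightarrow> 'g set" where
  "stab act Hs x = {h \<in> Hs. act h x = x}"

definition act_cos :: "('g, 'm) monoid_scheme \<Rightarrow> 'g \<Rightarrow> 'g set \<Rightarrow> 'g set" where
  "act_cos G h x = h <#\<^bsub>G\<^esub> x"

definition act_sub :: "('g, 'm) monoid_scheme \<Rightarrow> 'g \<Rightarrow> 'g set set \<Rightarrow> 'g set set" where
  "act_sub G h U = act_cos G h ` U"

definition act_sec :: "('g, 'm) monoid_scheme \<Rightarrow> 'g set set \<Rightarrow> 'g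
                        \<Rightarrow> ('g set \<Rightarrow> 'g set) \<Rightarrow> ('g set \<Rightarrow> 'g set)" where
  "act_sec G Xs h s = restrict (\<lambda>x. act_cos G h (s (act_cos G (inv\<^bsub>G\<^esub> h) x))) Xs"

text \<open>Sections of the projection H/L -> H/K (for L \<le> K \<le> H).\<close>
definition sections :: "('g, 'm) monoid_scheme \<Rightarrow> 'g set \<Rightarrow> 'g set \<Rightarrow> 'g set
                        \<Rightarrow> ('g set \<Rightarrow> 'g set) set" where
  "sections G H K L = {s \<in> lcos G H K \<rightarrow>\<^sub>E lcos G H L. \<forall>x\<in>lcos G H K. s x \<subseteq> x}"

text \<open>
  lvl T H   = the ring T(G/H)
  res T H K = restriction T(G/H) -> T(G/K)   (K \<le> H)
  tr T K H  = transfer T(G/K) -> T(G/H)      (K \<le> H)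
  nm T K H  = norm T(G/K) -> T(G/H)          (K \<le> H)
  cj T g H  = conjugation T(G/H) -> T(G/gHg^-1)
\<close>
record ('g, 'r) tambara =
  lvl :: "'g set \<Rightarrow> 'r ring"
  res :: "'g set \<Rightarrow> 'g set \<Rightarrow> 'r \<Rightarrow> 'r"
  tr  :: "'g set \<Rightarrow> 'g set \<Rightarrow> 'r \<Rightarrow> 'r"
  nm  :: "'g set \<Rightarrow> 'g set \<Rightarrow> 'r \<Rightarrow> 'r"
  cj  :: "'g \<Rightarrow> 'g set \<Rightarrow> 'r \<Rightarrow> 'r"

definition tambara_functor :: "('g, 'm) monoid_scheme \<Rightarrow> ('g, 'r) tambara \<Rightarrow> bool" where
  "tambara_functor G T \<longleftrightarrow>
    \<comment> \<open>levels are commutative rings\<close>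
    (\<forall>H. subgroup H G \<longrightarrow> cring (lvl T H)) \<and>
    \<comment> \<open>restriction: ring maps; transfer: additive maps; norm: multiplicative unital maps\<close>
    (\<forall>H K. subgroup H G \<and> subgroup K G \<and> K \<subseteq> H \<longrightarrow>
        res T H K \<in> ring_hom (lvl T H) (lvl T K) \<and>
        tr T K H \<in> hom (add_monoid (lvl T K)) (add_monoid (lvl T H)) \<and>
        nm T K H \<in> hom (lvl T K) (lvl T H) \<and>
        nm T K H \<one>\<^bsub>lvl T K\<^esub> = \<one>\<^bsub>lvl T H\<^esub> \<and>
        nm T K H \<zero>\<^bsub>lvl T K\<^esub> = \<zero>\<^bsub>lvl T H\<^esub>) \<and>
    \<comment> \<open>conjugations: ring isomorphisms, action of G, trivial on H for h in H\<close>
    (\<forall>H g. subgroup H G \<and> g \<in> carrier G \<longrightarrow>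
        cj T g H \<in> ring_hom (lvl T H) (lvl T (conjg G g H))) \<and>
    (\<forall>H h a. subgroup H G \<and> h \<in> H \<and> a \<in> carrier (lvl T H) \<longrightarrow> cj T h H a = a) \<and>
    (\<forall>H g g' a. subgroup H G \<and> g \<in> carrier G \<and> g' \<in> carrier G \<and> a \<in> carrier (lvl T H) \<longrightarrow>
        cj T (g \<otimes>\<^bsub>G\<^esub> g') H a = cj T g (conjg G g' H) (cj T g' H a)) \<and>
    \<comment> \<open>functoriality\<close>
    (\<forall>H a. subgroup H G \<and> a \<in> carrier (lvl T H) \<longrightarrow>
        res T H H a = a \<and> tr T H H a = a \<and> nm T H H a = a) \<and>
    (\<forall>H K L a. subgroup H G \<and> subgroup K G \<and> subgroup L G \<and> L \<subseteq> K \<and> K \<subseteq> H \<longrightarrow>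
        (a \<in> carrier (lvl T H) \<longrightarrow> res T K L (res T H K a) = res T H L a) \<and>
        (a \<in> carrier (lvl T L) \<longrightarrow> tr T K H (tr T L K a) = tr T L H a) \<and>
        (a \<in> carrier (lvl T L) \<longrightarrow> nm T K H (nm T L K a) = nm T L H a)) \<and>
    \<comment> \<open>compatibility with conjugation\<close>
    (\<forall>H K g. subgroup H G \<and> subgroup K G \<and> K \<subseteq> H \<and> g \<in> carrier G \<longrightarrow>
        (\<forall>a \<in> carrier (lvl T H).
           cj T g K (res T H K a) = res T (conjg G g H) (conjg G g K) (cj T g H a)) \<and>
        (\<forall>a \<in> carrier (lvl T K).
           cj T g H (tr T K H a) = tr T (conjg G g K) (conjg G g H) (cj T g K a) \<and>
           cj T g H (nm T K H a) = nm T (conjg G g K) (conjg G g H) (cj T g K a))) \<and>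
    \<comment> \<open>double coset formulas (for every choice of orbit and coset representatives)\<close>
    (\<forall>H K L Q \<rho> a. subgroup H G \<and> subgroup K G \<and> subgroup L G \<and> K \<subseteq> H \<and> L \<subseteq> H \<and>
        a \<in> carrier (lvl T K) \<and>
        orbit_reps (act_cos G) L (lcos G H K) Q \<and> (\<forall>x \<in> lcos G H K. \<rho> x \<in> x) \<longrightarrow>
        res T H L (tr T K H a) =
          (\<Oplus>\<^bsub>lvl T L\<^esub> x \<in> Q. tr T (L \<inter> conjg G (\<rho> x) K) L
              (cj T (\<rho> x) (conjg G (inv\<^bsub>G\<^esub> (\<rho> x)) L \<inter> K)
                 (res T K (conjg G (inv\<^bsub>G\<^esub> (\<rho> x)) L \<inter> K) a))) \<and>
        res T H L (nm T K H a) =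
          (\<Otimes>\<^bsub>lvl T L\<^esub> x \<in> Q. nm T (L \<inter> conjg G (\<rho> x) K) L
              (cj T (\<rho> x) (conjg G (inv\<^bsub>G\<^esub> (\<rho> x)) L \<inter> K)
                 (res T K (conjg G (inv\<^bsub>G\<^esub> (\<rho> x)) L \<inter> K) a)))) \<and>
    \<comment> \<open>Frobenius reciprocity\<close>
    (\<forall>H K a b. subgroup H G \<and> subgroup K G \<and> K \<subseteq> H \<and>
        a \<in> carrier (lvl T K) \<and> b \<in> carrier (lvl T H) \<longrightarrow>
        tr T K H (a \<otimes>\<^bsub>lvl T K\<^esub> res T H K b) = tr T K H a \<otimes>\<^bsub>lvl T H\<^esub> b) \<and>
    \<comment> \<open>Tambara reciprocity: norm of a sum\<close>
    (\<forall>H K a b R Q \<rho>. subgroup H G \<and> subgroup K G \<and> K \<subseteq> H \<and>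
        a \<in> carrier (lvl T K) \<and> b \<in> carrier (lvl T K) \<and>
        orbit_reps (act_sub G) H (Pow (lcos G H K)) R \<and>
        (\<forall>U \<in> R. orbit_reps (act_cos G) (stab (act_sub G) H U) (lcos G H K) (Q U)) \<and>
        (\<forall>x \<in> lcos G H K. \<rho> x \<in> x) \<longrightarrow>
        nm T K H (a \<oplus>\<^bsub>lvl T K\<^esub> b) =
          (\<Oplus>\<^bsub>lvl T H\<^esub> U \<in> R. tr T (stab (act_sub G) H U) H
             (\<Otimes>\<^bsub>lvl T (stab (act_sub G) H U)\<^esub> x \<in> Q U.
                nm T (stab (act_sub G) H U \<inter> conjg G (\<rho> x) K) (stab (act_sub G) H U)
                  (cj T (\<rho> x) (conjg G (inv\<^bsub>G\<^esub> (\<rho> x)) (stab (act_sub G) H U) \<inter> K)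
                    (res T K (conjg G (inv\<^bsub>G\<^esub> (\<rho> x)) (stab (act_sub G) H U) \<inter> K)
                       (if x \<in> U then a else b)))))) \<and>
    \<comment> \<open>Tambara reciprocity: norm of a transfer\<close>
    (\<forall>H K L a R Q \<rho>. subgroup H G \<and> subgroup K G \<and> subgroup L G \<and> L \<subseteq> K \<and> K \<subseteq> H \<and>
        a \<in> carrier (lvl T L) \<and>
        orbit_reps (act_sec G (lcos G H K)) H (sections G H K L) R \<and>
        (\<forall>s \<in> R. orbit_reps (act_cos G) (stab (act_sec G (lcos G H K)) H s) (lcos G H K) (Q s)) \<and>
        (\<forall>x \<in> lcos G H K \<union> lcos G H L. \<rho> x \<in> x) \<longrightarrow>
        nm T K H (tr T L K a) =
          (\<Oplus>\<^bsub>lvl T H\<^esub> s \<in> R. tr T (stab (act_sec G (lcos G H K)) H s) H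
             (\<Otimes>\<^bsub>lvl T (stab (act_sec G (lcos G H K)) H s)\<^esub> x \<in> Q s.
                nm T (stab (act_sec G (lcos G H K)) H s \<inter> conjg G (\<rho> x) K)
                     (stab (act_sec G (lcos G H K)) H s)
                  (res T (conjg G (\<rho> (s x)) L)
                         (stab (act_sec G (lcos G H K)) H s \<inter> conjg G (\<rho> x) K)
                     (cj T (\<rho> (s x)) L a)))))"

definition tambara_ideal :: "('g, 'm) monoid_scheme \<Rightarrow> ('g, 'r) tambara \<Rightarrow> ('g set \<Rightarrow> 'r set) \<Rightarrow> bool" where
  "tambara_ideal G T I \<longleftrightarrow>
    (\<forall>H. subgroup H G \<longrightarrow> ideal (I H) (lvl T H)) \<and>
    (\<forall>H K. subgroup H G \<and> subgroup K G \<and> K \<subseteq> H \<longrightarrow>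
        (\<forall>a \<in> I H. res T H K a \<in> I K) \<and>
        (\<forall>a \<in> I K. tr T K H a \<in> I H) \<and>
        (\<forall>a \<in> I K. nm T K H a \<in> I H)) \<and>
    (\<forall>H g. subgroup H G \<and> g \<in> carrier G \<longrightarrow> (\<forall>a \<in> I H. cj T g H a \<in> I (conjg G g H)))"

definition tambara_ideal_prod :: "('g, 'm) monoid_scheme \<Rightarrow> ('g, 'r) tambara
     \<Rightarrow> ('g set \<Rightarrow> 'r set) \<Rightarrow> ('g set \<Rightarrow> 'r set) \<Rightarrow> ('g set \<Rightarrow> 'r set)" where
  "tambara_ideal_prod G T I J = (\<lambda>H. \<Inter> {M H | M. tambara_ideal G T M \<and>
       (\<forall>H'. subgroup H' G \<longrightarrow> ideal_prod (lvl T H') (I H') (J H') \<subseteq> M H')})"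

end

theory Submission
  imports Defs
begin

text \<open>
  The product IJ is squeezed between the levelwise product I(G/H)J(G/H) and I(G/H) \<inter> J(G/H),
  because the levelwise intersection of two Tambara ideals is again a Tambara ideal containing all
  levelwise products. Both bounds have radical \<open>\<surd>I(G/H) \<inter> \<surd>J(G/H)\<close>: if \<open>x\<^sup>n \<in> I\<close> and
  \<open>x\<^sup>m \<in> J\<close> then \<open>x\<^sup>n\<^sup>+\<^sup>m = x\<^sup>n x\<^sup>m \<in> IJ\<close>.
\<close>

lemma radical_mono: "A \<subseteq> B \<Longrightarrow> radical R A \<subseteq> radical R B"
  unfolding radical_def by blast

lemma (in ring) Int_radical_subset_radical_ideal_prod:
  "radical R I \<inter> radical R J \<subseteq> radical R (I \<cdot> J)"
proof
  fix x assume "x \<in> radical R I \<inter> radical R J"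
  then obtain n m where x: "x \<in> carrier R" and n: "x [^] (n::nat) \<in> I" and m: "x [^] (m::nat) \<in> J"
    unfolding radical_def by blast
  from n m have "x [^] n \<otimes> x [^] m \<in> I \<cdot> J"
    by (rule ideal_prod.prod)
  then have "x [^] (n + m) \<in> I \<cdot> J"
    by (simp add: nat_pow_mult x)
  with x show "x \<in> radical R (I \<cdot> J)"
    unfolding radical_def by blast
qed

lemma (in ring) radical_eq_Int_radicalI:
  assumes "I \<cdot> J \<subseteq> P" and "P \<subseteq> I \<inter> J"
  shows "radical R P = radical R I \<inter> radical R J"
proof
  have "radical R P \<subseteq> radical R (I \<inter> J)"
    using assms(2) by (rule radical_mono)
  also have "\<dots> \<subseteq> radical R I \<inter> radical R J"
    by (simp add: radical_mono)
  finally show "radical R P \<subseteq> radical R I \<inter> radical R J" .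
next
  have "radical R I \<inter> radical R J \<subseteq> radical R (I \<cdot> J)"
    by (rule Int_radical_subset_radical_ideal_prod)
  also have "\<dots> \<subseteq> radical R P"
    using assms(1) by (rule radical_mono)
  finally show "radical R I \<inter> radical R J \<subseteq> radical R P" .
qed

lemma tambara_functor_cring:
  assumes "tambara_functor G T" and "subgroup H G"
  shows "cring (lvl T H)"
  using assms(1)[unfolded tambara_functor_def, THEN conjunct1] assms(2) by blast

lemma tambara_ideal_ideal:
  assumes "tambara_ideal G T I" and "subgroup H G"
  shows "ideal (I H) (lvl T H)"
  using assms(1)[unfolded tambara_ideal_def, THEN conjunct1] assms(2) by blast

lemma tambara_ideal_Int:
  assumes T: "tambara_functor G T" and I: "tambara_ideal G T I" and J: "tambara_ideal G T J"
  shows "tambara_ideal G T (\<lambda>H. I H \<inter> J H)"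
proof -
  have "ideal (I H \<inter> J H) (lvl T H)" if H: "subgroup H G" for H
  proof -
    interpret cring "lvl T H"
      using T H by (rule tambara_functor_cring)
    show ?thesis
      using tambara_ideal_ideal[OF I H] tambara_ideal_ideal[OF J H] by (rule i_intersect)
  qed
  with I J show ?thesis
    unfolding tambara_ideal_def by (intro conjI allI impI ballI) auto
qed

lemma tambara_ideal_prod_subset_Int:
  assumes T: "tambara_functor G T" and I: "tambara_ideal G T I" and J: "tambara_ideal G T J"
  shows "tambara_ideal_prod G T I J H \<subseteq> I H \<inter> J H"
proof -
  have "ideal_prod (lvl T K) (I K) (J K) \<subseteq> I K \<inter> J K" if K: "subgroup K G" for K
  proof -
    interpret cring "lvl T K"
      using T K by (rule tambara_functor_cring)
    show ?thesis
      using tambara_ideal_ideal[OF I K] tambara_ideal_ideal[OF J K] by (rule ideal_prod_inter)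
  qed
  with tambara_ideal_Int[OF T I J] show ?thesis
    unfolding tambara_ideal_prod_def by blast
qed

lemma ideal_prod_subset_tambara_ideal_prod:
  assumes "subgroup H G"
  shows "ideal_prod (lvl T H) (I H) (J H) \<subseteq> tambara_ideal_prod G T I J H"
  using assms unfolding tambara_ideal_prod_def by blast

theorem lemma4p28:
  fixes G :: "('g, 'm) monoid_scheme" and T :: "('g, 'r) tambara"
    and I J :: "'g set \<Rightarrow> 'r set" and H :: "'g set"
  assumes "group G" and "finite (carrier G)"
    and "tambara_functor G T"
    and "tambara_ideal G T I" and "tambara_ideal G T J"
    and "subgroup H G"
  shows "radical (lvl T H) (tambara_ideal_prod G T I J H)
           = radical (lvl T H) (I H) \<inter> radical (lvl T H) (J H)"
proof -
  interpret cring "lvl T H"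
    using assms(3,6) by (rule tambara_functor_cring)
  show ?thesis
    using ideal_prod_subset_tambara_ideal_prod[OF assms(6)]
      tambara_ideal_prod_subset_Int[OF assms(3-5)]
    by (rule radical_eq_Int_radicalI)
qed

end
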